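(* For all positive integers $s,k$ and every integer $n\geq 2$, the graph $sL_{n+1}\cup kL_n$ (the disjoint union of $s$ copies of $L_{n+1}$ and $k$ copies of $L_n$) is $C_4$-supermagic.
   Context: All graphs are finite and simple. For a graph $H$, a graph $G=(V,E)$ has an $H$-covering if every edge of $G$ belongs to a subgraph of $G$ isomorphic to $H$. For such $G$, an $H$-magic labeling is a bijection $\lambda: V\cup E\to\{1,2,\dots,|V|+|E|\}$ for which there is a constant $c$ such that for every subgraph $H'=(V',E')$ of $G$ isomorphic to $H$, $\sum_{v\in V'}\lambda(v)+\sum_{e\in E'}\lambda(e)=c$. It is $H$-supermagic if moreover $\{\lambda(v):v\in V\}=\{1,\dots,|V|\}$; $G$ is $H$-supermagic if it admits such a labeling. $C_k$ is the cycle of length $k$. $sG$ denotes the disjoint union of $s$ copies of $G$, and $\cup$ denotes disjoint union. The ladder $L_n=P_n\times P_2$ ($n\ge2$) has vertices $u_i,v_i$ ($1\le i\le n$) and edges $u_iv_i$ ($1\le i\le n$), $u_iu_{i+1}$ and $v_iv_{i+1}$ ($1\le i\le n-1$). *)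

theory Defs
  imports Main
begin

definition simple_graph :: "'a set \<Rightarrow> 'a set set \<Rightarrow> bool" where
  "simple_graph V E \<longleftrightarrow> finite V \<and> (\<forall>e\<in>E. e \<subseteq> V \<and> card e = 2)"

definition C4_subgraphs :: "'a set \<Rightarrow> 'a set set \<Rightarrow> ('a set \<times> 'a set set) set" where
  "C4_subgraphs V E = {(V', E'). \<exists>a b c d. distinct [a, b, c, d] \<and>
      V' = {a, b, c, d} \<and> E' = {{a, b}, {b, c}, {c, d}, {d, a}} \<and>
      V' \<subseteq> V \<and> E' \<subseteq> E}"

definition C4_covering :: "'a set \<Rightarrow> 'a set set \<Rightarrow> bool" where
  "C4_covering V E \<longleftrightarrow> (\<forall>e\<in>E. \<exists>(V', E')\<in>C4_subgraphs V E. e \<in> E')"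

definition C4_magic_labeling ::
  "'a set \<Rightarrow> 'a set set \<Rightarrow> ('a \<Rightarrow> nat) \<Rightarrow> ('a set \<Rightarrow> nat) \<Rightarrow> bool" where
  "C4_magic_labeling V E lv le \<longleftrightarrow>
     bij_betw (case_sum lv le) (V <+> E) {1..card V + card E} \<and>
     (\<exists>c. \<forall>(V', E')\<in>C4_subgraphs V E. sum lv V' + sum le E' = c)"

definition C4_supermagic_labeling ::
  "'a set \<Rightarrow> 'a set set \<Rightarrow> ('a \<Rightarrow> nat) \<Rightarrow> ('a set \<Rightarrow> nat) \<Rightarrow> bool" where
  "C4_supermagic_labeling V E lv le \<longleftrightarrow>
     C4_magic_labeling V E lv le \<and> lv ` V = {1..card V}"

definition C4_supermagic :: "'a set \<Rightarrow> 'a set set \<Rightarrow> bool" where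
  "C4_supermagic V E \<longleftrightarrow> simple_graph V E \<and> C4_covering V E \<and>
     (\<exists>lv le. C4_supermagic_labeling V E lv le)"

text \<open>Vertex (j,i,b): copy j (j < s+k), position i
  (1 \<le> i \<le> length of copy j), side b (False = u_i, True = v_i).\<close>

definition lad_len :: "nat \<Rightarrow> nat \<Rightarrow> nat \<Rightarrow> nat" where
  "lad_len s n j = (if j < s then n + 1 else n)"

definition ladders_V :: "nat \<Rightarrow> nat \<Rightarrow> nat \<Rightarrow> (nat \<times> nat \<times> bool) set" where
  "ladders_V s k n = {(j, i, b). j < s + k \<and> 1 \<le> i \<and> i \<le> lad_len s n j}"

definition ladders_E :: "nat \<Rightarrow> nat \<Rightarrow> nat \<Rightarrow> (nat \<times> nat \<times> bool) set set" where
  "ladders_E s k n =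
     {{(j, i, False), (j, i, True)} | j i. j < s + k \<and> 1 \<le> i \<and> i \<le> lad_len s n j} \<union>
     {{(j, i, b), (j, i + 1, b)} | j i b. j < s + k \<and> 1 \<le> i \<and> i < lad_len s n j}"

end

theory Submission
  imports Defs
begin

text \<open>
  The 4-cycles of a disjoint union of ladders are exactly its squares
  \<open>u\<^sub>i v\<^sub>i v\<^sub>i\<^sub>+\<^sub>1 u\<^sub>i\<^sub>+\<^sub>1\<close>. Number the \<open>N\<close> rungs of all copies consecutively by
  \<open>q = 0, \<dots>, N - 1\<close> and the \<open>M\<close> gaps between consecutive rungs of one copy by
  \<open>t = 0, \<dots>, M - 1\<close>. Label \<open>u\<^sub>q\<close> by \<open>q + 1\<close>, \<open>v\<^sub>q\<close> by \<open>N + 1 + z(q)\<close>, rung \<open>q\<close> by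
  \<open>2N + 1 + z(q)\<close>, the lower rail in gap \<open>t\<close> by \<open>3N + 1 + t\<close> and the upper one by
  \<open>3N + 2M - t\<close>, where \<open>z\<close> is a permutation of \<open>{0, \<dots>, N - 1}\<close> with
  \<open>q + z(q) + z(q + 1)\<close> constant. The two rails of a square add up to a constant, and the
  increase of the \<open>u\<close>-labels from one rung to the next is compensated by \<open>z\<close>.
  Nothing depends on the lengths of the copies beyond each having at least two rungs.
\<close>

lemma bij_betw_prefix_sum_index:
  fixes f :: "nat \<Rightarrow> nat"
  shows "bij_betw (\<lambda>(j, i). (\<Sum>j'<j. f j') + i - 1) (SIGMA j:{..<m}. {1..f j}) {..<\<Sum>j<m. f j}"
proof (induction m)
  case 0
  show ?case by (simp add: bij_betw_def)
next
  case (Suc m)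
  let ?S = "\<Sum>j<m. f j"
  have last: "bij_betw (\<lambda>(j, i). (\<Sum>j'<j. f j') + i - 1) ({m} \<times> {1..f m}) {?S..<?S + f m}"
    by (rule bij_betw_byWitness[where f' = "\<lambda>x. (m, x + 1 - ?S)"]) (auto simp: image_iff)
  have "bij_betw (\<lambda>(j, i). (\<Sum>j'<j. f j') + i - 1)
      ((SIGMA j:{..<m}. {1..f j}) \<union> {m} \<times> {1..f m}) ({..<?S} \<union> {?S..<?S + f m})"
    by (rule bij_betw_combine[OF Suc.IH last]) auto
  moreover have "(SIGMA j:{..<Suc m}. {1..f j}) = (SIGMA j:{..<m}. {1..f j}) \<union> {m} \<times> {1..f m}"
    by (auto simp: less_Suc_eq)
  moreover have "{..<?S} \<union> {?S..<?S + f m} = {..<\<Sum>j<Suc m. f j}"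
    by auto
  ultimately show ?case by simp
qed

definition zigzag :: "nat \<Rightarrow> nat \<Rightarrow> nat" where
  "zigzag N q = (if even q then (N - 1) div 2 - q div 2 else N - 1 - q div 2)"

lemma zigzag_cases:
  obtains h where "q = 2 * h" "zigzag N q = (N - 1) div 2 - h"
  | h where "q = Suc (2 * h)" "zigzag N q = N - 1 - h"
  by (cases "even q") (auto simp: zigzag_def elim!: evenE oddE)

lemma double_less_imp_le_half_pred: "2 * h < N \<Longrightarrow> h \<le> (N - 1) div 2" for h N :: nat
  by linarith

lemma bij_betw_zigzag: "bij_betw (zigzag N) {..<N} {..<N}"
proof -
  have "zigzag N q < N" if "q < N" for q
    using that by (cases q N rule: zigzag_cases) auto
  moreover have "inj_on (zigzag N) {..<N}"
  proof (rule inj_onI)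
    fix q q' assume "q \<in> {..<N}" "q' \<in> {..<N}" "zigzag N q = zigzag N q'"
    then show "q = q'"
      by (cases q N rule: zigzag_cases; cases q' N rule: zigzag_cases) (auto dest!: double_less_imp_le_half_pred, linarith)
  qed
  ultimately show ?thesis
    by (simp add: bij_betw_def endo_inj_surj image_subset_iff)
qed

lemma zigzag_Suc:
  assumes "Suc q < N"
  shows "q + zigzag N q + zigzag N (Suc q) = (N - 1) div 2 + N - 1"
  using assms by (cases q N rule: zigzag_cases) (auto simp: zigzag_def dest!: double_less_imp_le_half_pred)

lemma bij_betw_image_of_inj:
  assumes "inj_on h A" and "bij_betw (f \<circ> h) A B"
  shows "bij_betw f (h ` A) B"
  using bij_betw_comp_iff[OF inj_on_imp_bij_betw[OF assms(1)]] assms(2) by blast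

lemma bij_betw_case_sum:
  assumes "bij_betw f A C" and "bij_betw g B D" and "C \<inter> D = {}"
  shows "bij_betw (case_sum f g) (A <+> B) (C \<union> D)"
proof -
  have "bij_betw (case_sum f g) (Inl ` A) C" "bij_betw (case_sum f g) (Inr ` B) D"
    using assms(1,2) by (auto intro!: bij_betw_image_of_inj simp: comp_def)
  then show ?thesis
    unfolding Plus_def using assms(3) by (rule bij_betw_combine)
qed

lemma bij_betw_combine_intervals:
  fixes a b c :: nat
  assumes "bij_betw f A {a<..b}" and "bij_betw f B {b<..c}" and "a \<le> b" and "b \<le> c"
  shows "bij_betw f (A \<union> B) {a<..c}"
proof -
  have "{a<..b} \<union> {b<..c} = {a<..c}" using assms(3,4) by auto
  with bij_betw_combine[OF assms(1,2)] show ?thesis by auto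
qed

lemma bij_betw_shift_up:
  fixes g :: "'a \<Rightarrow> nat"
  assumes "bij_betw g A {..<n}" and "d = c + n"
  shows "bij_betw (\<lambda>x. c + Suc (g x)) A {c<..d}"
proof -
  have "bij_betw (\<lambda>y. c + Suc y) {..<n} {c<..c + n}"
    by (rule bij_betw_byWitness[where f' = "\<lambda>z. z - Suc c"]) (auto simp: image_iff)
  from bij_betw_trans[OF assms(1) this] show ?thesis by (simp add: comp_def assms(2))
qed

lemma bij_betw_shift_down:
  fixes g :: "'a \<Rightarrow> nat"
  assumes "bij_betw g A {..<n}" and "d = c + n"
  shows "bij_betw (\<lambda>x. c + (n - g x)) A {c<..d}"
proof -
  have "bij_betw (\<lambda>y. c + (n - y)) {..<n} {c<..c + n}"
    by (rule bij_betw_byWitness[where f' = "\<lambda>z. c + n - z"]) (auto simp: image_iff)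
  from bij_betw_trans[OF assms(1) this] show ?thesis by (simp add: comp_def assms(2))
qed

definition ladder_union_V :: "nat \<Rightarrow> (nat \<Rightarrow> nat) \<Rightarrow> (nat \<times> nat \<times> bool) set" where
  "ladder_union_V m L = {(j, i, b). j < m \<and> 1 \<le> i \<and> i \<le> L j}"

definition ladder_union_E :: "nat \<Rightarrow> (nat \<Rightarrow> nat) \<Rightarrow> (nat \<times> nat \<times> bool) set set" where
  "ladder_union_E m L =
     {{(j, i, False), (j, i, True)} | j i. j < m \<and> 1 \<le> i \<and> i \<le> L j} \<union>
     {{(j, i, b), (j, i + 1, b)} | j i b. j < m \<and> 1 \<le> i \<and> i < L j}"

lemma ladders_V_eq_ladder_union: "ladders_V s k n = ladder_union_V (s + k) (lad_len s n)"
  unfolding ladders_V_def ladder_union_V_def ..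

lemma ladders_E_eq_ladder_union: "ladders_E s k n = ladder_union_E (s + k) (lad_len s n)"
  unfolding ladders_E_def ladder_union_E_def ..

fun ladder_edge :: "nat \<times> nat \<times> bool option \<Rightarrow> (nat \<times> nat \<times> bool) set" where
  "ladder_edge (j, i, None) = {(j, i, False), (j, i, True)}"
| "ladder_edge (j, i, Some b) = {(j, i, b), (j, Suc i, b)}"

lemma inj_ladder_edge: "inj ladder_edge"
proof (rule injI)
  fix x y assume "ladder_edge x = ladder_edge y"
  then show "x = y"
    by (cases x rule: ladder_edge.cases; cases y rule: ladder_edge.cases)
      (auto simp: doubleton_eq_iff)
qed

definition ladder_adjacent :: "nat \<times> nat \<times> bool \<Rightarrow> nat \<times> nat \<times> bool \<Rightarrow> bool" where
  "ladder_adjacent = (\<lambda>(j, i, b) (j', i', b').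
     j = j' \<and> (i = i' \<and> b \<noteq> b' \<or> b = b' \<and> (i' = Suc i \<or> i = Suc i')))"

definition square_edge_indices :: "nat \<Rightarrow> nat \<Rightarrow> (nat \<times> nat \<times> bool option) set" where
  "square_edge_indices j i = {(j, i, None), (j, i, Some True), (j, Suc i, None), (j, i, Some False)}"

definition ladder_square :: "nat \<Rightarrow> nat \<Rightarrow> (nat \<times> nat \<times> bool) set \<times> (nat \<times> nat \<times> bool) set set" where
  "ladder_square j i =
     ({(j, i, False), (j, i, True), (j, Suc i, True), (j, Suc i, False)},
      ladder_edge ` square_edge_indices j i)"

definition square_traversals ::
  "nat \<Rightarrow> nat \<Rightarrow> ((nat \<times> nat \<times> bool) \<times> (nat \<times> nat \<times> bool) \<times> (nat \<times> nat \<times> bool) \<times> (nat \<times> nat \<times> bool)) set" where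
  "square_traversals j i =
    (let a = (j, i, False); b = (j, i, True); c = (j, Suc i, True); d = (j, Suc i, False) in
     {(a, b, c, d), (b, c, d, a), (c, d, a, b), (d, a, b, c),
      (a, d, c, b), (d, c, b, a), (c, b, a, d), (b, a, d, c)})"

lemma four_cycle_in_square_traversals:
  assumes "ladder_adjacent (j1, i1, b1) (j2, i2, b2)" "ladder_adjacent (j2, i2, b2) (j3, i3, b3)"
    "ladder_adjacent (j3, i3, b3) (j4, i4, b4)" "ladder_adjacent (j4, i4, b4) (j1, i1, b1)"
    and "distinct [(j1, i1, b1), (j2, i2, b2), (j3, i3, b3), (j4, i4, b4)]"
  shows "((j1, i1, b1), (j2, i2, b2), (j3, i3, b3), (j4, i4, b4))
    \<in> square_traversals j1 (min (min i1 i2) (min i3 i4))"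
  using assms unfolding ladder_adjacent_def square_traversals_def Let_def
  by (cases b1; cases b2; cases b3; cases b4) (auto simp: min_def)

lemma square_traversal_cycle:
  assumes "(a, b, c, d) \<in> square_traversals j i"
  shows "({a, b, c, d}, {{a, b}, {b, c}, {c, d}, {d, a}}) = ladder_square j i"
  using assms unfolding square_traversals_def ladder_square_def square_edge_indices_def Let_def
  by (auto simp: insert_commute)

lemma four_cycle_is_ladder_square:
  assumes "ladder_adjacent a b" "ladder_adjacent b c" "ladder_adjacent c d" "ladder_adjacent d a"
    and "distinct [a, b, c, d]"
  shows "\<exists>j i. ({a, b, c, d}, {{a, b}, {b, c}, {c, d}, {d, a}}) = ladder_square j i"
proof -
  obtain j1 i1 b1 j2 i2 b2 j3 i3 b3 j4 i4 b4
    where "a = (j1, i1, b1)" "b = (j2, i2, b2)" "c = (j3, i3, b3)" "d = (j4, i4, b4)"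
    by (metis prod.exhaust)
  with assms four_cycle_in_square_traversals square_traversal_cycle show ?thesis by metis
qed

lemma ladder_union_E_adjacent: "{x, y} \<in> ladder_union_E m L \<Longrightarrow> ladder_adjacent x y"
  unfolding ladder_union_E_def ladder_adjacent_def by (auto simp: doubleton_eq_iff)

context
  fixes m :: nat and L :: "nat \<Rightarrow> nat"
begin

definition rungs :: "(nat \<times> nat) set" where
  "rungs = (SIGMA j:{..<m}. {1..L j})"

definition gaps :: "(nat \<times> nat) set" where
  "gaps = (SIGMA j:{..<m}. {1..L j - 1})"

lemma finite_rungs: "finite rungs"
  unfolding rungs_def by auto

lemma ladder_union_V_eq:
  "ladder_union_V m L = (\<lambda>(j, i). (j, i, False)) ` rungs \<union> (\<lambda>(j, i). (j, i, True)) ` rungs"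
  unfolding ladder_union_V_def rungs_def by (auto simp: image_iff)

definition edge_indices :: "(nat \<times> nat \<times> bool option) set" where
  "edge_indices = (\<lambda>(j, i). (j, i, None)) ` rungs \<union>
     (\<lambda>(j, i). (j, i, Some False)) ` gaps \<union> (\<lambda>(j, i). (j, i, Some True)) ` gaps"

lemma ladder_union_E_eq: "ladder_union_E m L = ladder_edge ` edge_indices"
proof
  show "ladder_union_E m L \<subseteq> ladder_edge ` edge_indices"
  proof
    fix e assume "e \<in> ladder_union_E m L"
    then consider j i where "j < m" "1 \<le> i" "i \<le> L j" "e = ladder_edge (j, i, None)"
      | j i b where "j < m" "1 \<le> i" "i < L j" "e = ladder_edge (j, i, Some b)"
      unfolding ladder_union_E_def by auto
    then show "e \<in> ladder_edge ` edge_indices"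
    proof cases
      case 1
      then show ?thesis
        by (intro rev_image_eqI[of "(j, i, None)"]) (auto simp: edge_indices_def rungs_def)
    next
      case 2
      then show ?thesis
        by (intro rev_image_eqI[of "(j, i, Some b)"]) (cases b; auto simp: edge_indices_def gaps_def)
    qed
  qed
  show "ladder_edge ` edge_indices \<subseteq> ladder_union_E m L"
    unfolding edge_indices_def rungs_def gaps_def ladder_union_E_def by fastforce
qed

definition rung_count :: nat where
  "rung_count = (\<Sum>j<m. L j)"

definition gap_count :: nat where
  "gap_count = (\<Sum>j<m. L j - 1)"

definition rung_index :: "nat \<Rightarrow> nat \<Rightarrow> nat" where
  "rung_index j i = (\<Sum>j'<j. L j') + i - 1"

definition gap_index :: "nat \<Rightarrow> nat \<Rightarrow> nat" where
  "gap_index j i = (\<Sum>j'<j. L j' - 1) + i - 1"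

lemma bij_betw_rung_index: "bij_betw (\<lambda>(j, i). rung_index j i) rungs {..<rung_count}"
  unfolding rung_index_def rungs_def rung_count_def by (rule bij_betw_prefix_sum_index)

lemma bij_betw_gap_index: "bij_betw (\<lambda>(j, i). gap_index j i) gaps {..<gap_count}"
  unfolding gap_index_def gaps_def gap_count_def by (rule bij_betw_prefix_sum_index)

definition vertex_label :: "nat \<times> nat \<times> bool \<Rightarrow> nat" where
  "vertex_label = (\<lambda>(j, i, b).
     if b then rung_count + Suc (zigzag rung_count (rung_index j i)) else Suc (rung_index j i))"

fun edge_index_label :: "nat \<times> nat \<times> bool option \<Rightarrow> nat" where
  "edge_index_label (j, i, None) = 2 * rung_count + Suc (zigzag rung_count (rung_index j i))"
| "edge_index_label (j, i, Some False) = 3 * rung_count + Suc (gap_index j i)"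
| "edge_index_label (j, i, Some True) = 3 * rung_count + gap_count + (gap_count - gap_index j i)"

definition edge_label :: "(nat \<times> nat \<times> bool) set \<Rightarrow> nat" where
  "edge_label e = edge_index_label (inv ladder_edge e)"

lemma edge_label_ladder_edge [simp]: "edge_label (ladder_edge x) = edge_index_label x"
  by (simp add: edge_label_def inj_ladder_edge)

lemma sum_edge_label_image: "sum edge_label (ladder_edge ` X) = sum edge_index_label X"
proof -
  have "sum edge_label (ladder_edge ` X) = sum (edge_label \<circ> ladder_edge) X"
    by (rule sum.reindex[OF inj_on_subset[OF inj_ladder_edge subset_UNIV]])
  also have "edge_label \<circ> ladder_edge = edge_index_label"
    by (simp add: fun_eq_iff)
  finally show ?thesis .
qed

lemma bij_betw_vertex_label: "bij_betw vertex_label (ladder_union_V m L) {0<..2 * rung_count}"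
proof -
  have "bij_betw vertex_label ((\<lambda>(j, i). (j, i, False)) ` rungs) {0<..rung_count}"
    using bij_betw_shift_up[OF bij_betw_rung_index, of rung_count 0]
    by (intro bij_betw_image_of_inj) (auto simp: inj_on_def comp_def vertex_label_def case_prod_beta')
  moreover have "bij_betw vertex_label ((\<lambda>(j, i). (j, i, True)) ` rungs) {rung_count<..2 * rung_count}"
    using bij_betw_shift_up[OF bij_betw_trans[OF bij_betw_rung_index bij_betw_zigzag], of "2 * rung_count" rung_count]
    by (intro bij_betw_image_of_inj) (auto simp: inj_on_def comp_def vertex_label_def case_prod_beta')
  ultimately show ?thesis
    unfolding ladder_union_V_eq by (rule bij_betw_combine_intervals) auto
qed

lemma bij_betw_edge_label:
  "bij_betw edge_label (ladder_union_E m L) {2 * rung_count<..3 * rung_count + 2 * gap_count}"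
proof -
  have "bij_betw edge_index_label ((\<lambda>(j, i). (j, i, None)) ` rungs) {2 * rung_count<..3 * rung_count}"
    using bij_betw_shift_up[OF bij_betw_trans[OF bij_betw_rung_index bij_betw_zigzag], of "3 * rung_count" "2 * rung_count"]
    by (intro bij_betw_image_of_inj) (auto simp: inj_on_def comp_def case_prod_beta')
  moreover have "bij_betw edge_index_label ((\<lambda>(j, i). (j, i, Some False)) ` gaps)
      {3 * rung_count<..3 * rung_count + gap_count}"
    using bij_betw_shift_up[OF bij_betw_gap_index, of "3 * rung_count + gap_count" "3 * rung_count"]
    by (intro bij_betw_image_of_inj) (auto simp: inj_on_def comp_def case_prod_beta')
  moreover have "bij_betw edge_index_label ((\<lambda>(j, i). (j, i, Some True)) ` gaps)
      {3 * rung_count + gap_count<..3 * rung_count + 2 * gap_count}"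
    using bij_betw_shift_down[OF bij_betw_gap_index, of "3 * rung_count + 2 * gap_count" "3 * rung_count + gap_count"]
    by (intro bij_betw_image_of_inj) (auto simp: inj_on_def comp_def case_prod_beta')
  ultimately have "bij_betw edge_index_label edge_indices {2 * rung_count<..3 * rung_count + 2 * gap_count}"
    unfolding edge_indices_def by (intro bij_betw_combine_intervals) auto
  then show ?thesis
    unfolding ladder_union_E_eq
    by (intro bij_betw_image_of_inj) (auto simp: comp_def inj_on_subset[OF inj_ladder_edge])
qed

lemma ladder_square_subgraph:
  assumes "(j, i) \<in> gaps"
  shows "ladder_square j i \<in> C4_subgraphs (ladder_union_V m L) (ladder_union_E m L)"
proof -
  let ?a = "(j, i, False)" and ?b = "(j, i, True)" and ?c = "(j, Suc i, True)" and ?d = "(j, Suc i, False)"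
  have "square_edge_indices j i \<subseteq> edge_indices"
    using assms by (auto simp: square_edge_indices_def edge_indices_def rungs_def gaps_def image_iff)
  then have E: "snd (ladder_square j i) \<subseteq> ladder_union_E m L"
    unfolding ladder_union_E_eq ladder_square_def snd_conv by (rule image_mono)
  have V: "{?a, ?b, ?c, ?d} \<subseteq> ladder_union_V m L"
    using assms by (auto simp: ladder_union_V_def gaps_def)
  have square: "ladder_square j i = ({?a, ?b, ?c, ?d}, {{?a, ?b}, {?b, ?c}, {?c, ?d}, {?d, ?a}})"
    unfolding ladder_square_def square_edge_indices_def by (auto simp: insert_commute)
  show ?thesis
    unfolding square C4_subgraphs_def mem_Collect_eq prod.case
    by (intro exI[of _ ?a] exI[of _ ?b] exI[of _ ?c] exI[of _ ?d]) (use V E square in simp)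
qed

lemma C4_subgraphs_ladder_union:
  "C4_subgraphs (ladder_union_V m L) (ladder_union_E m L) = (\<lambda>(j, i). ladder_square j i) ` gaps"
proof
  show "C4_subgraphs (ladder_union_V m L) (ladder_union_E m L) \<subseteq> (\<lambda>(j, i). ladder_square j i) ` gaps"
  proof
    fix H assume H_in: "H \<in> C4_subgraphs (ladder_union_V m L) (ladder_union_E m L)"
    obtain V' E' where H: "H = (V', E')" by (cases H)
    from H_in obtain a b c d where "distinct [a, b, c, d]"
      and V': "V' = {a, b, c, d}" and E': "E' = {{a, b}, {b, c}, {c, d}, {d, a}}"
      and V: "V' \<subseteq> ladder_union_V m L" and E: "E' \<subseteq> ladder_union_E m L"
      unfolding C4_subgraphs_def H mem_Collect_eq prod.case by (elim exE conjE) (rule that)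
    moreover have "{a, b} \<in> ladder_union_E m L" "{b, c} \<in> ladder_union_E m L"
      "{c, d} \<in> ladder_union_E m L" "{d, a} \<in> ladder_union_E m L"
      using E by (simp_all add: E')
    ultimately obtain j i where "({a, b, c, d}, {{a, b}, {b, c}, {c, d}, {d, a}}) = ladder_square j i"
      using four_cycle_is_ladder_square ladder_union_E_adjacent by meson
    then have square: "H = ladder_square j i"
      by (simp add: H V' E')
    then have "fst (ladder_square j i) \<subseteq> ladder_union_V m L"
      using V by (simp add: H flip: square)
    then have "(j, i) \<in> gaps"
      by (auto simp: ladder_square_def ladder_union_V_def gaps_def)
    then show "H \<in> (\<lambda>(j, i). ladder_square j i) ` gaps"
      unfolding square by (rule rev_image_eqI) simp
  qed
  show "(\<lambda>(j, i). ladder_square j i) ` gaps \<subseteq> C4_subgraphs (ladder_union_V m L) (ladder_union_E m L)"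
    using ladder_square_subgraph by auto
qed

lemma ladder_square_label_sum:
  assumes "(j, i) \<in> gaps"
  shows "sum vertex_label (fst (ladder_square j i)) + sum edge_label (snd (ladder_square j i))
    = 2 * ((rung_count - 1) div 2) + 14 * rung_count + 2 * gap_count + 6"
proof -
  let ?N = rung_count and ?M = gap_count and ?q = "rung_index j i" and ?t = "gap_index j i"
  have "1 \<le> i" and next_rung: "(j, Suc i) \<in> rungs"
    using assms by (auto simp: gaps_def rungs_def)
  then have q_Suc: "rung_index j (Suc i) = Suc ?q"
    by (simp add: rung_index_def)
  have "Suc ?q < ?N"
    using bij_betw_apply[OF bij_betw_rung_index next_rung] q_Suc by simp
  have "?t < ?M"
    using bij_betw_apply[OF bij_betw_gap_index assms] by simp
  have "sum vertex_label (fst (ladder_square j i)) = 2 * ?N + 2 * ?q + 5 + zigzag ?N ?q + zigzag ?N (Suc ?q)"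
    using q_Suc by (simp add: ladder_square_def vertex_label_def)
  moreover have "sum edge_label (snd (ladder_square j i))
      = sum edge_index_label (square_edge_indices j i)"
    unfolding ladder_square_def snd_conv by (rule sum_edge_label_image)
  moreover have "\<dots> = 10 * ?N + 2 * ?M + 3 + zigzag ?N ?q + zigzag ?N (Suc ?q)"
    using q_Suc \<open>?t < ?M\<close> by (simp add: square_edge_indices_def)
  moreover have "?q + zigzag ?N ?q + zigzag ?N (Suc ?q) = (?N - 1) div 2 + ?N - 1"
    using zigzag_Suc[OF \<open>Suc ?q < ?N\<close>] .
  ultimately show ?thesis
    using \<open>Suc ?q < ?N\<close> by linarith
qed

lemma C4_covering_ladder_union:
  assumes "\<And>j. j < m \<Longrightarrow> 2 \<le> L j"
  shows "C4_covering (ladder_union_V m L) (ladder_union_E m L)"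
proof -
  have in_square: "\<exists>(j, i) \<in> gaps. x \<in> square_edge_indices j i" if "x \<in> edge_indices" for x
  proof -
    obtain j i t where x: "x = (j, i, t)"
      by (cases x)
    show ?thesis
    proof (cases t)
      case None
      with that x have "(j, i) \<in> rungs"
        by (auto simp: edge_indices_def)
      show ?thesis
      proof (cases "i < L j")
        case True
        with \<open>(j, i) \<in> rungs\<close> show ?thesis
          by (intro bexI[of _ "(j, i)"]) (auto simp: x None square_edge_indices_def rungs_def gaps_def)
      next
        case False
        \<comment> \<open>the last rung of a copy lies in the square to its left, which exists as \<open>L j \<ge> 2\<close>\<close>
        moreover have "2 \<le> L j"
          using assms \<open>(j, i) \<in> rungs\<close> by (simp add: rungs_def)
        ultimately have "(j, i - 1) \<in> gaps" "x = (j, Suc (i - 1), None)"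
          using \<open>(j, i) \<in> rungs\<close> by (auto simp: x None rungs_def gaps_def)
        then show ?thesis
          by (intro bexI[of _ "(j, i - 1)"]) (auto simp: square_edge_indices_def)
      qed
    next
      case (Some b)
      with that x have "(j, i) \<in> gaps"
        by (auto simp: edge_indices_def)
      then show ?thesis
        by (intro bexI[of _ "(j, i)"]) (cases b; simp add: x Some square_edge_indices_def)
    qed
  qed
  show ?thesis
    unfolding C4_covering_def C4_subgraphs_ladder_union unfolding ladder_union_E_eq
  proof
    fix e assume "e \<in> ladder_edge ` edge_indices"
    then obtain x where "x \<in> edge_indices" and e: "e = ladder_edge x"
      by blast
    then obtain j i where "(j, i) \<in> gaps" "x \<in> square_edge_indices j i"
      using in_square by blast
    have "ladder_square j i \<in> (\<lambda>(j, i). ladder_square j i) ` gaps"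
      using \<open>(j, i) \<in> gaps\<close> by (rule rev_image_eqI) simp
    moreover have "e \<in> snd (ladder_square j i)"
      unfolding ladder_square_def snd_conv e using \<open>x \<in> square_edge_indices j i\<close> by (rule imageI)
    ultimately show "\<exists>(V', E') \<in> (\<lambda>(j, i). ladder_square j i) ` gaps. e \<in> E'"
      by (intro bexI[of _ "ladder_square j i"]) (simp_all add: case_prod_beta)
  qed
qed

lemma simple_graph_ladder_union: "simple_graph (ladder_union_V m L) (ladder_union_E m L)"
  unfolding simple_graph_def
proof
  show "finite (ladder_union_V m L)"
    unfolding ladder_union_V_eq using finite_rungs by blast
  show "\<forall>e \<in> ladder_union_E m L. e \<subseteq> ladder_union_V m L \<and> card e = 2"
    unfolding ladder_union_E_def ladder_union_V_def by auto
qed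

lemma C4_supermagic_ladder_union:
  assumes "\<And>j. j < m \<Longrightarrow> 2 \<le> L j"
  shows "C4_supermagic (ladder_union_V m L) (ladder_union_E m L)"
proof -
  have card_V: "card (ladder_union_V m L) = 2 * rung_count"
    using bij_betw_same_card[OF bij_betw_vertex_label] by simp
  have card_E: "card (ladder_union_E m L) = rung_count + 2 * gap_count"
    using bij_betw_same_card[OF bij_betw_edge_label] by simp
  have "bij_betw (case_sum vertex_label edge_label) (ladder_union_V m L <+> ladder_union_E m L)
      ({0<..2 * rung_count} \<union> {2 * rung_count<..3 * rung_count + 2 * gap_count})"
    by (rule bij_betw_case_sum[OF bij_betw_vertex_label bij_betw_edge_label]) auto
  moreover have "{0<..2 * rung_count} \<union> {2 * rung_count<..3 * rung_count + 2 * gap_count}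
      = {1..card (ladder_union_V m L) + card (ladder_union_E m L)}"
    unfolding card_V card_E by auto
  moreover have "vertex_label ` ladder_union_V m L = {1..card (ladder_union_V m L)}"
    using bij_betw_imp_surj_on[OF bij_betw_vertex_label] unfolding card_V by auto
  moreover have "\<forall>(V', E') \<in> C4_subgraphs (ladder_union_V m L) (ladder_union_E m L).
      sum vertex_label V' + sum edge_label E'
        = 2 * ((rung_count - 1) div 2) + 14 * rung_count + 2 * gap_count + 6"
    unfolding C4_subgraphs_ladder_union using ladder_square_label_sum by (auto; metis fst_conv snd_conv)
  ultimately show ?thesis
    unfolding C4_supermagic_def C4_supermagic_labeling_def C4_magic_labeling_def
    using simple_graph_ladder_union C4_covering_ladder_union[OF assms] by auto
qed

end

theorem theorem10:
  fixes s k n :: nat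
  assumes "s \<ge> 1" and "k \<ge> 1" and "n \<ge> 2"
  shows "C4_supermagic (ladders_V s k n) (ladders_E s k n)"
proof -
  have "2 \<le> lad_len s n j" for j
    using \<open>n \<ge> 2\<close> by (simp add: lad_len_def)
  then show ?thesis
    unfolding ladders_V_eq_ladder_union ladders_E_eq_ladder_union by (rule C4_supermagic_ladder_union)
qed

end
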